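(* $\mathrm{L\text{-}ESO}_{[0,1]}[=,\mathrm{SUM},0,1]\equiv_{[0,1]}\mathrm{L\text{-}ESO}_{d[0,1]}[=,\mathrm{SUM}]$. The same equivalence holds when both logics are restricted to almost conjunctive $\ddot\exists^*\forall^*$-formulae.
   Context: Conventions on structures and $\mathrm{ESO}_{\mathbb R}$. Let $\tau$ be a finite relational vocabulary and $\sigma$ a finite functional vocabulary. An $\mathbb R$-structure of vocabulary $\tau\cup\sigma$ is a tuple $\mathfrak A=(A,\mathbb R,(R^{\mathfrak A})_{R\in\tau},(g^{\mathfrak A})_{g\in\sigma})$ where $A$ is a finite set with at least two elements, each $R^{\mathfrak A}\subseteq A^{\mathrm{ar}(R)}$ and each $g^{\mathfrak A}\colon A^{\mathrm{ar}(g)}\to\mathbb R$. For $S\subseteq\mathbb R$, $\mathfrak A$ is an $S$-structure if every $g^{\mathfrak A}$ takes values in $S$, and a $d[0,1]$-structure if every $g^{\mathfrak A}$ is a probability distribution on $A^{\mathrm{ar}(g)}$. If $\sigma=\emptyset$, $\mathfrak A$ is a finite structure. Numerical terms are built by $i::=c\mid f(\vec x)\mid i+i\mid i\times i\mid \mathrm{SUM}_{\vec y}\,i$, where $c\in\mathbb R$ is a constant, $f$ is a function symbol or function variable, and $\vec x,\vec y$ are tuples of first-order variables; under an assignment $s$, $f(\vec x)$ denotes $f^{\mathfrak A}(s(\vec x))$, $+,\times$ are real addition and multiplication, and $\mathrm{SUM}_{\vec y}\,i$ denotes $\sum_{\vec a\in A^{|\vec y|}}[i]_{s[\vec a/\vec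 y]}$ (the variables $\vec y$ become bound). For $O\subseteq\{+,\times,\mathrm{SUM}\}$, $E\subseteq\{=,<,\le\}$, $C\subseteq\mathbb R$, the formulae of $\mathrm{ESO}_{\mathbb R}[O,E,C]$ are given by $\phi::= x=y\mid\neg x=y\mid i\,e\,j\mid\neg\, i\,e\,j\mid R(\vec x)\mid\neg R(\vec x)\mid\phi\wedge\phi\mid\phi\vee\phi\mid\exists x\phi\mid\forall x\phi\mid\exists f\phi$, where $i,j$ are numerical terms using only operations in $O$ and constants in $C$, $e\in E$, $R\in\tau$, and $f$ is a function variable. Semantics is Tarskian: first-order variables range over $A$ and $\exists f$ ranges over all functions $A^{\mathrm{ar}(f)}\to\mathbb R$. For $S\subseteq\mathbb R$, $\mathrm{ESO}_S[O,E,C]$ has the same syntax but $\exists f$ ranges over functions $A^{\mathrm{ar}(f)}\to S$; in $\mathrm{ESO}_{d[0,1]}[O,E,C]$, $\exists f$ ranges over probability distributions on $A^{\mathrm{ar}(f)}$. Free function variables are interpreted like symbols of $\sigma$. We list the elements of $O,E,C$ together in brackets, e.g. $\mathrm{ESO}_{\mathbb R}[\le,+,\mathrm{SUM},0,1]$ means $O=\{+,\mathrm{SUM}\}$, $E=\{\le\}$, $C=\{0,1\}$. Fragments. The loose fragment $\mathrm{L\text{-}ESO}_S[O,E,C]$ of $\mathrm{ESO}_S[O,E,C]$ ($S$ a set of reals or $d[0,1]$) consists of the formulae containing no negated numerical atom $\neg\, i\,e\,j$. A formula is almost conjunctive if for every subformula $(\psi_1\vee\psi_2)$, at least one of $\psi_1,\psi_2$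 contains no numerical term. For a regular expression $L$ over $\{\ddot\exists,\exists,\forall\}$, the $L$-formulae of a logic are those in prenex form whose quantifier prefix belongs to $L$, where $\ddot\exists$ stands for an existential function quantifier and $\exists,\forall$ for first-order quantifiers (e.g. $\ddot\exists^*\forall^*$). Expressivity. For a formula $\phi$ and $X\subseteq\mathbb R$ or $X=d[0,1]$, $\mathrm{Struc}_X(\phi)$ is the class of pairs $(\mathfrak A,s)$ with $\mathfrak A$ an $X$-structure and $s$ an assignment of the free first-order variables such that $\mathfrak A\models_s\phi$. For logics $\mathcal L,\mathcal L'$, $\mathcal L\le_X\mathcal L'$ means every $\phi\in\mathcal L$ has some $\psi\in\mathcal L'$ with $\mathrm{Struc}_X(\phi)=\mathrm{Struc}_X(\psi)$; $\equiv_X$ means $\le_X$ in both directions. *)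

theory Defs
  imports Complex_Main
begin

text \<open>Names of function symbols / function variables and of relation symbols are pairs
  (identifier, arity); the arity is the second component.  Structures have as universe
  a finite subset of nat with at least two elements (every finite structure is isomorphic
  to one of these).\<close>

type_synonym fname = "nat \<times> nat"
type_synonym rname = "nat \<times> nat"

datatype numop = OPlus | OTimes | OSum
datatype cmp = CEq | CLt | CLe

datatype nterm =
    NConst real
  | NApp fname "nat list"
  | NPlus nterm nterm
  | NTimes nterm nterm
  | NSum "nat list" nterm

datatype fm =
    VEq nat nat
  | VNeq nat nat
  | NumAt cmp nterm nterm
  | NegNumAt cmp nterm nterm
  | RelAt rname "nat list"
  | NRelAt rname "nat list"
  | Conj fm fm
  | Disj fm fm
  | QEx nat fm
  | QAll nat fm
  | FEx fname fm

definition tuples :: "nat set \<Rightarrow> nat \<Rightarrow> nat list set" where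
  "tuples A n = {xs. set xs \<subseteq> A \<and> length xs = n}"

fun upds :: "(nat \<Rightarrow> nat) \<Rightarrow> nat list \<Rightarrow> nat list \<Rightarrow> (nat \<Rightarrow> nat)" where
  "upds s (y # ys) (a # as) = upds (s(y := a)) ys as"
| "upds s _ _ = s"

fun teval :: "nat set \<Rightarrow> (fname \<Rightarrow> nat list \<Rightarrow> real) \<Rightarrow> (nat \<Rightarrow> nat) \<Rightarrow> nterm \<Rightarrow> real" where
  "teval A F s (NConst c) = c"
| "teval A F s (NApp f xs) = F f (map s xs)"
| "teval A F s (NPlus i j) = teval A F s i + teval A F s j"
| "teval A F s (NTimes i j) = teval A F s i * teval A F s j"
| "teval A F s (NSum ys i) = (\<Sum>as\<in>tuples A (length ys). teval A F (upds s ys as) i)"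

fun cmp_sem :: "cmp \<Rightarrow> real \<Rightarrow> real \<Rightarrow> bool" where
  "cmp_sem CEq a b = (a = b)"
| "cmp_sem CLt a b = (a < b)"
| "cmp_sem CLe a b = (a \<le> b)"

text \<open>Range of function quantifiers / of interpretations: values in a set S, or
  probability distributions (written d[0,1] in the paper).\<close>
datatype range = ValsIn "real set" | Dist

definition admissible :: "range \<Rightarrow> nat set \<Rightarrow> nat \<Rightarrow> (nat list \<Rightarrow> real) \<Rightarrow> bool" where
  "admissible X A k g = (case X of
      ValsIn S \<Rightarrow> (\<forall>xs\<in>tuples A k. g xs \<in> S)
    | Dist \<Rightarrow> (\<forall>xs\<in>tuples A k. 0 \<le> g xs) \<and> (\<Sum>xs\<in>tuples A k. g xs) = 1)"

fun sat :: "range \<Rightarrow> nat set \<Rightarrow> (rname \<Rightarrow> nat list \<Rightarrow> bool) \<Rightarrow> (fname \<Rightarrow> nat list \<Rightarrow> real)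
            \<Rightarrow> (nat \<Rightarrow> nat) \<Rightarrow> fm \<Rightarrow> bool" where
  "sat Q A R F s (VEq x y) = (s x = s y)"
| "sat Q A R F s (VNeq x y) = (s x \<noteq> s y)"
| "sat Q A R F s (NumAt c i j) = cmp_sem c (teval A F s i) (teval A F s j)"
| "sat Q A R F s (NegNumAt c i j) = (\<not> cmp_sem c (teval A F s i) (teval A F s j))"
| "sat Q A R F s (RelAt r xs) = R r (map s xs)"
| "sat Q A R F s (NRelAt r xs) = (\<not> R r (map s xs))"
| "sat Q A R F s (Conj a b) = (sat Q A R F s a \<and> sat Q A R F s b)"
| "sat Q A R F s (Disj a b) = (sat Q A R F s a \<or> sat Q A R F s b)"
| "sat Q A R F s (QEx x a) = (\<exists>v\<in>A. sat Q A R F (s(x := v)) a)"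
| "sat Q A R F s (QAll x a) = (\<forall>v\<in>A. sat Q A R F (s(x := v)) a)"
| "sat Q A R F s (FEx f a) = (\<exists>g. admissible Q A (snd f) g \<and> sat Q A R (F(f := g)) s a)"

fun term_ok :: "numop set \<Rightarrow> real set \<Rightarrow> nterm \<Rightarrow> bool" where
  "term_ok Ops C (NConst c) = (c \<in> C)"
| "term_ok Ops C (NApp f xs) = (length xs = snd f)"
| "term_ok Ops C (NPlus i j) = (OPlus \<in> Ops \<and> term_ok Ops C i \<and> term_ok Ops C j)"
| "term_ok Ops C (NTimes i j) = (OTimes \<in> Ops \<and> term_ok Ops C i \<and> term_ok Ops C j)"
| "term_ok Ops C (NSum ys i) = (OSum \<in> Ops \<and> term_ok Ops C i)"

fun fm_ok :: "numop set \<Rightarrow> cmp set \<Rightarrow> real set \<Rightarrow> fm \<Rightarrow> bool" where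
  "fm_ok Ops E C (VEq x y) = True"
| "fm_ok Ops E C (VNeq x y) = True"
| "fm_ok Ops E C (NumAt c i j) = (c \<in> E \<and> term_ok Ops C i \<and> term_ok Ops C j)"
| "fm_ok Ops E C (NegNumAt c i j) = (c \<in> E \<and> term_ok Ops C i \<and> term_ok Ops C j)"
| "fm_ok Ops E C (RelAt r xs) = (length xs = snd r)"
| "fm_ok Ops E C (NRelAt r xs) = (length xs = snd r)"
| "fm_ok Ops E C (Conj a b) = (fm_ok Ops E C a \<and> fm_ok Ops E C b)"
| "fm_ok Ops E C (Disj a b) = (fm_ok Ops E C a \<and> fm_ok Ops E C b)"
| "fm_ok Ops E C (QEx x a) = fm_ok Ops E C a"
| "fm_ok Ops E C (QAll x a) = fm_ok Ops E C a"
| "fm_ok Ops E C (FEx f a) = fm_ok Ops E C a"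

fun no_negnum :: "fm \<Rightarrow> bool" where
  "no_negnum (NegNumAt c i j) = False"
| "no_negnum (Conj a b) = (no_negnum a \<and> no_negnum b)"
| "no_negnum (Disj a b) = (no_negnum a \<and> no_negnum b)"
| "no_negnum (QEx x a) = no_negnum a"
| "no_negnum (QAll x a) = no_negnum a"
| "no_negnum (FEx f a) = no_negnum a"
| "no_negnum _ = True"

fun has_num :: "fm \<Rightarrow> bool" where
  "has_num (NumAt c i j) = True"
| "has_num (NegNumAt c i j) = True"
| "has_num (Conj a b) = (has_num a \<or> has_num b)"
| "has_num (Disj a b) = (has_num a \<or> has_num b)"
| "has_num (QEx x a) = has_num a"
| "has_num (QAll x a) = has_num a"
| "has_num (FEx f a) = has_num a"
| "has_num _ = False"

fun almost_conj :: "fm \<Rightarrow> bool" where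
  "almost_conj (Disj a b) = ((\<not> has_num a \<or> \<not> has_num b) \<and> almost_conj a \<and> almost_conj b)"
| "almost_conj (Conj a b) = (almost_conj a \<and> almost_conj b)"
| "almost_conj (QEx x a) = almost_conj a"
| "almost_conj (QAll x a) = almost_conj a"
| "almost_conj (FEx f a) = almost_conj a"
| "almost_conj _ = True"

fun qfree :: "fm \<Rightarrow> bool" where
  "qfree (QEx x a) = False"
| "qfree (QAll x a) = False"
| "qfree (FEx f a) = False"
| "qfree (Conj a b) = (qfree a \<and> qfree b)"
| "qfree (Disj a b) = (qfree a \<and> qfree b)"
| "qfree _ = True"

fun univ_prefix :: "fm \<Rightarrow> bool" where
  "univ_prefix (QAll x a) = univ_prefix a"
| "univ_prefix a = qfree a"

fun eso_univ :: "fm \<Rightarrow> bool" where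
  "eso_univ (FEx f a) = eso_univ a"
| "eso_univ a = univ_prefix a"

definition L_ESO :: "numop set \<Rightarrow> cmp set \<Rightarrow> real set \<Rightarrow> fm \<Rightarrow> bool" where
  "L_ESO Ops E C \<phi> = (fm_ok Ops E C \<phi> \<and> no_negnum \<phi>)"

definition is_structure :: "range \<Rightarrow> nat set \<Rightarrow> (fname \<Rightarrow> nat list \<Rightarrow> real) \<Rightarrow> bool" where
  "is_structure X A F = (finite A \<and> 2 \<le> card A \<and> (\<forall>f. admissible X A (snd f) (F f)))"

text \<open>A logic is a pair (range of function quantifiers, set of formulas).\<close>
definition leq_on :: "range \<Rightarrow> range \<times> (fm \<Rightarrow> bool) \<Rightarrow> range \<times> (fm \<Rightarrow> bool) \<Rightarrow> bool" where
  "leq_on X L1 L2 = (\<forall>\<phi>. snd L1 \<phi> \<longrightarrow> (\<exists>\<psi>. snd L2 \<psi> \<and>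
      (\<forall>A R F s. is_structure X A F \<longrightarrow> (\<forall>x. s x \<in> A) \<longrightarrow>
         (sat (fst L1) A R F s \<phi> \<longleftrightarrow> sat (fst L2) A R F s \<psi>))))"

definition equiv_on :: "range \<Rightarrow> range \<times> (fm \<Rightarrow> bool) \<Rightarrow> range \<times> (fm \<Rightarrow> bool) \<Rightarrow> bool" where
  "equiv_on X L1 L2 = (leq_on X L1 L2 \<and> leq_on X L2 L1)"

end

theory Submission
  imports Defs
begin

text \<open>Let \<open>n \<ge> 2\<close> be the size of the universe. A distribution quantifier is a [0,1]-quantifier
  guarded by the atom \<open>SUM f = 1\<close>. Conversely, a [0,1]-valued \<open>k\<close>-ary function \<open>g\<close> is represented
  by a distribution \<open>d\<close> on \<open>(k + 2)\<close>-tuples through \<open>g(x) = n\<^sup>k \<Sum>\<^sub>w d(x, w, w)\<close>, subject to the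
  row condition that \<open>n\<^sup>k\<close> times the total mass of \<open>d(x, -, -)\<close> is 1; every \<open>g\<close> arises in this
  way, by putting the mass \<open>g(x) / n\<^sup>k\<close> on the diagonal of row \<open>x\<close> and the rest off the diagonal.
  The constants are simulated as well: 1 is the value of the unique nullary distribution, and 0 is
  \<open>e(v, v)\<close> for a binary distribution \<open>e\<close>, which the atom \<open>SUM\<^sub>y e(v, v) = e(v, v)\<close>, i.e.
  \<open>n e(v, v) = e(v, v)\<close>, forces to vanish on the diagonal. In both directions the side conditions
  of the leading function quantifiers are moved below the universal prefix, so that almost
  conjunctive formulae consisting of function quantifiers, universal quantifiers and a
  quantifier-free matrix are mapped to such formulae.\<close>

section \<open>Tuples and simultaneous assignments\<close>

lemma tuples_0 [simp]: "tuples A 0 = {[]}"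
  by (auto simp: tuples_def)

lemma tuples_Suc: "tuples A (Suc n) = (\<lambda>(a, xs). a # xs) ` (A \<times> tuples A n)"
  by (auto simp: tuples_def image_iff length_Suc_conv)

lemma length_tuples: "xs \<in> tuples A n \<Longrightarrow> length xs = n"
  by (simp add: tuples_def)

lemma set_tuples: "xs \<in> tuples A n \<Longrightarrow> set xs \<subseteq> A"
  by (simp add: tuples_def)

lemma finite_tuples: "finite A \<Longrightarrow> finite (tuples A n)"
  unfolding tuples_def by (rule finite_lists_length_eq)

lemma card_tuples: "finite A \<Longrightarrow> card (tuples A n) = card A ^ n"
  unfolding tuples_def by (rule card_lists_length_eq)

lemma tuples_nonempty: "A \<noteq> {} \<Longrightarrow> tuples A n \<noteq> {}"
proof -
  assume "A \<noteq> {}"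
  then obtain a where "a \<in> A" by blast
  then have "replicate n a \<in> tuples A n" by (auto simp: tuples_def)
  then show ?thesis by blast
qed

lemma ball_tuples_Suc: "(\<forall>xs\<in>tuples A (Suc n). P xs) \<longleftrightarrow> (\<forall>a\<in>A. \<forall>xs\<in>tuples A n. P (a # xs))"
  by (auto simp: tuples_Suc)

lemma ball_tuples_take:
  assumes "k \<le> n" and "A \<noteq> {}"
  shows "(\<forall>xs\<in>tuples A n. P (take k xs)) \<longleftrightarrow> (\<forall>xs\<in>tuples A k. P xs)"
proof
  assume H: "\<forall>xs\<in>tuples A n. P (take k xs)"
  show "\<forall>xs\<in>tuples A k. P xs"
  proof
    fix xs assume xs: "xs \<in> tuples A k"
    obtain ys where ys: "ys \<in> tuples A (n - k)" using tuples_nonempty[OF assms(2)] by blast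
    have "xs @ ys \<in> tuples A n" using xs ys assms(1) by (auto simp: tuples_def)
    then have "P (take k (xs @ ys))" using H by blast
    then show "P xs" using xs by (simp add: tuples_def)
  qed
next
  assume "\<forall>xs\<in>tuples A k. P xs"
  moreover have "take k xs \<in> tuples A k" if "xs \<in> tuples A n" for xs
    using that assms(1) set_take_subset[of k xs] by (auto simp: tuples_def)
  ultimately show "\<forall>xs\<in>tuples A n. P (take k xs)" by blast
qed

lemma ball_tuples_nth_0:
  assumes "1 \<le> n" and "A \<noteq> {}"
  shows "(\<forall>xs\<in>tuples A n. P (xs ! 0)) \<longleftrightarrow> (\<forall>a\<in>A. P a)"
proof -
  have "(\<forall>xs\<in>tuples A n. P (xs ! 0)) \<longleftrightarrow> (\<forall>xs\<in>tuples A n. (\<lambda>ys. P (ys ! 0)) (take 1 xs))"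
    using assms(1) by (auto simp: length_tuples)
  also have "\<dots> \<longleftrightarrow> (\<forall>xs\<in>tuples A 1. P (xs ! 0))"
    by (rule ball_tuples_take[OF assms])
  also have "\<dots> \<longleftrightarrow> (\<forall>a\<in>A. P a)"
    using ball_tuples_Suc[of A 0 "\<lambda>xs. P (xs ! 0)"] by simp
  finally show ?thesis .
qed

lemma sum_tuples_Suc:
  assumes "finite A"
  shows "(\<Sum>xs\<in>tuples A (Suc n). h xs) = (\<Sum>a\<in>A. \<Sum>xs\<in>tuples A n. h (a # xs))"
proof -
  have "inj_on (\<lambda>(a, xs). a # xs) (A \<times> tuples A n)" by (auto simp: inj_on_def)
  then have "(\<Sum>xs\<in>tuples A (Suc n). h xs) = (\<Sum>(a, xs)\<in>A \<times> tuples A n. h (a # xs))"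
    unfolding tuples_Suc by (simp add: sum.reindex case_prod_unfold)
  then show ?thesis by (simp add: sum.cartesian_product)
qed

lemma sum_tuples_add:
  assumes "finite A"
  shows "(\<Sum>xs\<in>tuples A (m + n). h xs) = (\<Sum>xs\<in>tuples A m. \<Sum>ys\<in>tuples A n. h (xs @ ys))"
proof (induction m arbitrary: h)
  case (Suc m)
  then show ?case by (simp add: sum_tuples_Suc[OF assms])
qed simp

lemma sum_tuples_2: "finite A \<Longrightarrow> (\<Sum>xs\<in>tuples A 2. h xs) = (\<Sum>a\<in>A. \<Sum>b\<in>A. h [a, b])"
  by (simp add: numeral_2_eq_2 sum_tuples_Suc)

lemma sum_tuples_nth_0:
  "finite A \<Longrightarrow> (\<Sum>xs\<in>tuples A (Suc k). h (xs ! 0)) = real (card A) ^ k * (\<Sum>a\<in>A. h a)"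
  by (simp add: sum_tuples_Suc card_tuples sum_distrib_left sum_distrib_right mult.commute)

lemma sum_tuples_drop:
  assumes "finite A"
  shows "(\<Sum>xs\<in>tuples A (k + n). h (drop k xs)) = real (card A) ^ k * (\<Sum>ys\<in>tuples A n. h ys)"
proof -
  have "(\<Sum>xs\<in>tuples A (k + n). h (drop k xs)) = (\<Sum>xs\<in>tuples A k. \<Sum>ys\<in>tuples A n. h ys)"
    by (simp add: sum_tuples_add[OF assms] length_tuples)
  then show ?thesis by (simp add: card_tuples[OF assms])
qed

lemma upds_notin: "x \<notin> set ys \<Longrightarrow> upds s ys as x = s x"
  by (induction s ys as rule: upds.induct) auto

lemma upds_in_cong:
  "x \<in> set ys \<Longrightarrow> length as = length ys \<Longrightarrow> upds s ys as x = upds s' ys as x"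
proof (induction ys arbitrary: s s' as)
  case (Cons y ys)
  then obtain a as' where "as = a # as'" by (cases as) auto
  with Cons show ?case by (cases "x \<in> set ys") (auto simp: upds_notin)
qed simp

lemma upds_nth:
  "distinct ys \<Longrightarrow> length as = length ys \<Longrightarrow> i < length ys \<Longrightarrow> upds s ys as (ys ! i) = as ! i"
proof (induction ys arbitrary: s as i)
  case (Cons y ys)
  then obtain a as' where "as = a # as'" by (cases as) auto
  with Cons show ?case by (cases i) (auto simp: upds_notin)
qed simp

lemma map_upds: "distinct ys \<Longrightarrow> length as = length ys \<Longrightarrow> map (upds s ys as) ys = as"
  by (rule nth_equalityI) (auto simp: upds_nth)

lemma map_upds_upt_take:
  assumes "length as = K" and "k \<le> K"
  shows "map (upds s [V..<V + K] as) [V..<V + k] = take k as"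
proof -
  have "[V..<V + k] = take k [V..<V + K]" using assms(2) by (simp add: take_upt)
  then show ?thesis using map_upds[of "[V..<V + K]" as s] assms(1) by (simp add: take_map[symmetric])
qed

lemma upds_in: "\<forall>x. s x \<in> A \<Longrightarrow> set as \<subseteq> A \<Longrightarrow> upds s ys as x \<in> A"
  by (induction s ys as rule: upds.induct) auto

lemma sat_foldr_QAll:
  "sat Q A R F s (foldr QAll xs \<phi>) \<longleftrightarrow> (\<forall>as\<in>tuples A (length xs). sat Q A R F (upds s xs as) \<phi>)"
  by (induction xs arbitrary: s) (simp_all add: ball_tuples_Suc)

section \<open>Coincidence lemmas\<close>

fun fnames_term :: "nterm \<Rightarrow> fname set" where
  "fnames_term (NConst c) = {}"
| "fnames_term (NApp f xs) = {f}"
| "fnames_term (NPlus i j) = fnames_term i \<union> fnames_term j"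
| "fnames_term (NTimes i j) = fnames_term i \<union> fnames_term j"
| "fnames_term (NSum ys i) = fnames_term i"

fun fnames :: "fm \<Rightarrow> fname set" where
  "fnames (NumAt c i j) = fnames_term i \<union> fnames_term j"
| "fnames (NegNumAt c i j) = fnames_term i \<union> fnames_term j"
| "fnames (Conj a b) = fnames a \<union> fnames b"
| "fnames (Disj a b) = fnames a \<union> fnames b"
| "fnames (QEx x a) = fnames a"
| "fnames (QAll x a) = fnames a"
| "fnames (FEx f a) = insert f (fnames a)"
| "fnames _ = {}"

fun vars_term :: "nterm \<Rightarrow> nat set" where
  "vars_term (NConst c) = {}"
| "vars_term (NApp f xs) = set xs"
| "vars_term (NPlus i j) = vars_term i \<union> vars_term j"
| "vars_term (NTimes i j) = vars_term i \<union> vars_term j"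
| "vars_term (NSum ys i) = set ys \<union> vars_term i"

fun vars :: "fm \<Rightarrow> nat set" where
  "vars (VEq x y) = {x, y}"
| "vars (VNeq x y) = {x, y}"
| "vars (NumAt c i j) = vars_term i \<union> vars_term j"
| "vars (NegNumAt c i j) = vars_term i \<union> vars_term j"
| "vars (RelAt r xs) = set xs"
| "vars (NRelAt r xs) = set xs"
| "vars (Conj a b) = vars a \<union> vars b"
| "vars (Disj a b) = vars a \<union> vars b"
| "vars (QEx x a) = insert x (vars a)"
| "vars (QAll x a) = insert x (vars a)"
| "vars (FEx f a) = vars a"

fun prefix_fnames :: "fm \<Rightarrow> fname set" where
  "prefix_fnames (FEx f a) = insert f (prefix_fnames a)"
| "prefix_fnames (QAll x a) = prefix_fnames a"
| "prefix_fnames _ = {}"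

lemma finite_fnames: "finite (fnames \<phi>)"
proof -
  have "finite (fnames_term t)" for t by (induction t) auto
  then show ?thesis by (induction \<phi>) auto
qed

lemma finite_vars: "finite (vars \<phi>)"
proof -
  have "finite (vars_term t)" for t by (induction t) auto
  then show ?thesis by (induction \<phi>) auto
qed

lemma prefix_fnames_subset: "prefix_fnames \<phi> \<subseteq> fnames \<phi>"
  by (induction \<phi>) auto

definition agree_on :: "fname set \<Rightarrow> (fname \<Rightarrow> nat list \<Rightarrow> real) \<Rightarrow> (fname \<Rightarrow> nat list \<Rightarrow> real) \<Rightarrow> bool"
  where "agree_on S F G \<longleftrightarrow> (\<forall>f\<in>S. \<forall>xs. length xs = snd f \<longrightarrow> F f xs = G f xs)"

lemma teval_cong_fnames:
  "term_ok Ops C t \<Longrightarrow> agree_on (fnames_term t) F G \<Longrightarrow> teval A F s t = teval A G s t"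
  by (induction t arbitrary: s) (auto simp: agree_on_def)

lemma sat_cong_fnames:
  "fm_ok Ops E C \<phi> \<Longrightarrow> agree_on (fnames \<phi>) F G \<Longrightarrow> sat Q A R F s \<phi> \<longleftrightarrow> sat Q A R G s \<phi>"
proof (induction \<phi> arbitrary: F G s)
  case (NumAt c i j)
  then have "agree_on (fnames_term i) F G" "agree_on (fnames_term j) F G" by (auto simp: agree_on_def)
  with NumAt.prems show ?case
    using teval_cong_fnames[of Ops C i F G] teval_cong_fnames[of Ops C j F G] by simp
next
  case (NegNumAt c i j)
  then have "agree_on (fnames_term i) F G" "agree_on (fnames_term j) F G" by (auto simp: agree_on_def)
  with NegNumAt.prems show ?case
    using teval_cong_fnames[of Ops C i F G] teval_cong_fnames[of Ops C j F G] by simp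
next
  case (Conj a b)
  then have "agree_on (fnames a) F G" "agree_on (fnames b) F G" by (auto simp: agree_on_def)
  with Conj show ?case by simp
next
  case (Disj a b)
  then have "agree_on (fnames a) F G" "agree_on (fnames b) F G" by (auto simp: agree_on_def)
  with Disj show ?case by simp
next
  case (FEx f a)
  then have "agree_on (fnames a) (F(f := g)) (G(f := g))" for g by (auto simp: agree_on_def)
  with FEx have "sat Q A R (F(f := g)) s a \<longleftrightarrow> sat Q A R (G(f := g)) s a" for g by simp
  then show ?case by (simp only: sat.simps)
qed simp_all

lemma teval_cong_vars: "\<forall>x\<in>vars_term t. s x = s' x \<Longrightarrow> teval A F s t = teval A F s' t"
proof (induction t arbitrary: s s')
  case (NSum ys i)
  have "teval A F (upds s ys as) i = teval A F (upds s' ys as) i"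
    if as: "as \<in> tuples A (length ys)" for as
  proof (rule NSum.IH, rule ballI)
    fix x assume "x \<in> vars_term i"
    then show "upds s ys as x = upds s' ys as x"
      using NSum.prems upds_in_cong[OF _ length_tuples[OF as]]
      by (cases "x \<in> set ys") (auto simp: upds_notin)
  qed
  then show ?case by simp
next
  case (NApp f xs)
  then have "map s xs = map s' xs" by auto
  then show ?case by (simp only: teval.simps)
next
  case (NPlus i j)
  then have "\<forall>x\<in>vars_term i. s x = s' x" "\<forall>x\<in>vars_term j. s x = s' x" by auto
  then show ?case using NPlus.IH(1)[of s s'] NPlus.IH(2)[of s s'] by simp
next
  case (NTimes i j)
  then have "\<forall>x\<in>vars_term i. s x = s' x" "\<forall>x\<in>vars_term j. s x = s' x" by auto
  then show ?case using NTimes.IH(1)[of s s'] NTimes.IH(2)[of s s'] by simp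
qed auto

lemma sat_cong_vars: "\<forall>x\<in>vars \<phi>. s x = s' x \<Longrightarrow> sat Q A R F s \<phi> \<longleftrightarrow> sat Q A R F s' \<phi>"
proof (induction \<phi> arbitrary: s s' F)
  case (NumAt c i j)
  then show ?case using teval_cong_vars[of i s s' A F] teval_cong_vars[of j s s' A F] by auto
next
  case (NegNumAt c i j)
  then show ?case using teval_cong_vars[of i s s' A F] teval_cong_vars[of j s s' A F] by auto
next
  case (RelAt r xs)
  then have "map s xs = map s' xs" by auto
  then show ?case by (simp only: sat.simps)
next
  case (NRelAt r xs)
  then have "map s xs = map s' xs" by auto
  then show ?case by (simp only: sat.simps)
next
  case (Conj a b)
  then have "\<forall>x\<in>vars a. s x = s' x" "\<forall>x\<in>vars b. s x = s' x" by auto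
  then show ?case using Conj.IH(1)[of s s' F] Conj.IH(2)[of s s' F] by simp
next
  case (Disj a b)
  then have "\<forall>x\<in>vars a. s x = s' x" "\<forall>x\<in>vars b. s x = s' x" by auto
  then show ?case using Disj.IH(1)[of s s' F] Disj.IH(2)[of s s' F] by simp
next
  case (QEx x a)
  then have "sat Q A R F (s(x := v)) a \<longleftrightarrow> sat Q A R F (s'(x := v)) a" for v by (intro QEx.IH) auto
  then show ?case by simp
next
  case (QAll x a)
  then have "sat Q A R F (s(x := v)) a \<longleftrightarrow> sat Q A R F (s'(x := v)) a" for v by (intro QAll.IH) auto
  then show ?case by simp
qed auto

lemma sat_fun_upd_prefix_fname:
  "f \<in> prefix_fnames \<phi> \<Longrightarrow> sat Q A R (F(f := g)) s \<phi> \<longleftrightarrow> sat Q A R F s \<phi>"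
proof (induction \<phi> arbitrary: F s)
  case (FEx h a)
  show ?case
  proof (cases "h = f")
    case False
    then have "F(f := g, h := k) = F(h := k, f := g)" for k by (rule fun_upd_twist[symmetric])
    with FEx have "sat Q A R (F(f := g, h := k)) s a \<longleftrightarrow> sat Q A R (F(h := k)) s a" for k
      by (metis False prefix_fnames.simps(1) insertE)
    then show ?thesis by (simp only: sat.simps)
  qed (simp only: sat.simps fun_upd_upd)
qed auto

section \<open>Distribution quantifiers as guarded [0,1]-quantifiers\<close>

definition sums_to_one :: "nat set \<Rightarrow> nat \<Rightarrow> (nat list \<Rightarrow> real) \<Rightarrow> bool" where
  "sums_to_one A k g \<longleftrightarrow> (\<Sum>xs\<in>tuples A k. g xs) = 1"

lemma admissible_Dist_iff:
  assumes "finite A"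
  shows "admissible Dist A k g \<longleftrightarrow> admissible (ValsIn {0..1}) A k g \<and> sums_to_one A k g"
proof -
  have "g xs \<le> 1"
    if "\<forall>xs\<in>tuples A k. 0 \<le> g xs" "(\<Sum>xs\<in>tuples A k. g xs) = 1" "xs \<in> tuples A k" for xs
    using member_le_sum[of xs "tuples A k" g] that finite_tuples[OF assms] by auto
  then show ?thesis by (auto simp: admissible_def sums_to_one_def)
qed

lemma ex_admissible_unit: "\<exists>g. admissible (ValsIn {0..1}) A k g"
  by (rule exI[of _ "\<lambda>_. 0"]) (simp add: admissible_def)

lemma ex_admissible_Dist:
  assumes "finite A" and "A \<noteq> {}"
  shows "\<exists>g. admissible Dist A k g"
proof -
  have "card (tuples A k) > 0"
    using finite_tuples[OF assms(1)] tuples_nonempty[OF assms(2)] by (simp add: card_gt_0_iff)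
  then have "admissible Dist A k (\<lambda>_. 1 / real (card (tuples A k)))"
    by (simp add: admissible_def)
  then show ?thesis by blast
qed

definition sum_one_fm :: "fname \<Rightarrow> fm" where
  "sum_one_fm f = NumAt CEq (NSum [0..<snd f] (NApp f [0..<snd f])) (NConst 1)"

definition sum_one_fms :: "fname list \<Rightarrow> fm" where
  "sum_one_fms fs = foldr (\<lambda>f \<phi>. Conj (sum_one_fm f) \<phi>) fs (VEq 0 0)"

fun dist_guard :: "fm \<Rightarrow> fm" where
  "dist_guard (FEx f a) = FEx f (Conj (sum_one_fm f) (dist_guard a))"
| "dist_guard (Conj a b) = Conj (dist_guard a) (dist_guard b)"
| "dist_guard (Disj a b) = Disj (dist_guard a) (dist_guard b)"
| "dist_guard (QEx x a) = QEx x (dist_guard a)"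
| "dist_guard (QAll x a) = QAll x (dist_guard a)"
| "dist_guard a = a"

text \<open>The guards of the leading function quantifiers are collected in \<open>fs\<close> and placed below the
  universal prefix. A guard then constrains the innermost binding of its name, hence the exception
  \<open>prefix_fnames\<close> in \<open>sat_dist_guard_prenex\<close>.\<close>

fun dist_guard_prenex :: "fname list \<Rightarrow> fm \<Rightarrow> fm" where
  "dist_guard_prenex fs (FEx f a) = FEx f (dist_guard_prenex (f # fs) a)"
| "dist_guard_prenex fs (QAll x a) = QAll x (dist_guard_prenex fs a)"
| "dist_guard_prenex fs a = Conj (sum_one_fms fs) (dist_guard a)"

lemma sat_sum_one_fm: "sat Q A R F s (sum_one_fm f) \<longleftrightarrow> sums_to_one A (snd f) (F f)"
proof -
  have "(\<Sum>as\<in>tuples A (snd f). F f (map (upds s [0..<snd f] as) [0..<snd f]))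
       = (\<Sum>as\<in>tuples A (snd f). F f as)"
    by (rule sum.cong) (auto simp: map_upds length_tuples)
  then show ?thesis by (simp add: sum_one_fm_def sums_to_one_def)
qed

lemma sat_sum_one_fms: "sat Q A R F s (sum_one_fms fs) \<longleftrightarrow> (\<forall>f\<in>set fs. sums_to_one A (snd f) (F f))"
  by (induction fs) (auto simp: sum_one_fms_def sat_sum_one_fm)

lemma sat_dist_guard:
  "finite A \<Longrightarrow> sat (ValsIn {0..1}) A R F s (dist_guard \<phi>) \<longleftrightarrow> sat Dist A R F s \<phi>"
  by (induction \<phi> arbitrary: F s) (auto simp: admissible_Dist_iff sat_sum_one_fm)

lemma sat_dist_guard_prenex:
  assumes fin: "finite A" and ne: "A \<noteq> {}"
  shows "sat (ValsIn {0..1}) A R F s (dist_guard_prenex fs \<phi>) \<longleftrightarrow>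
    (\<forall>h\<in>set fs - prefix_fnames \<phi>. sums_to_one A (snd h) (F h)) \<and> sat Dist A R F s \<phi>"
proof (induction \<phi> arbitrary: fs F s)
  case (QAll x a)
  show ?case using ne by (simp only: sat.simps dist_guard_prenex.simps prefix_fnames.simps QAll.IH) blast
next
  case (FEx f a)
  show ?case
  proof (cases "f \<in> prefix_fnames a")
    case True
    then have upd: "sat Dist A R (F(f := g)) s a \<longleftrightarrow> sat Dist A R F s a" for g
      by (rule sat_fun_upd_prefix_fname)
    from True have guards: "(\<forall>h\<in>set (f # fs) - prefix_fnames a. sums_to_one A (snd h) ((F(f := g)) h))
        \<longleftrightarrow> (\<forall>h\<in>set fs - prefix_fnames (FEx f a). sums_to_one A (snd h) (F h))" for g
      by auto
    show ?thesis
      unfolding dist_guard_prenex.simps sat.simps FEx.IH guards upd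
      using ex_admissible_unit[of A "snd f"] ex_admissible_Dist[OF fin ne, of "snd f"] by blast
  next
    case False
    then have guards: "(\<forall>h\<in>set (f # fs) - prefix_fnames a. sums_to_one A (snd h) ((F(f := g)) h))
        \<longleftrightarrow> sums_to_one A (snd f) g \<and> (\<forall>h\<in>set fs - prefix_fnames (FEx f a). sums_to_one A (snd h) (F h))"
      for g by auto
    show ?thesis
      unfolding dist_guard_prenex.simps sat.simps FEx.IH guards admissible_Dist_iff[OF fin] by blast
  qed
qed (simp_all add: sat_sum_one_fms sat_dist_guard[OF fin])

lemma sat_dist_guard_prenex_Nil:
  assumes "is_structure X A F"
  shows "sat (ValsIn {0..1}) A R F s (dist_guard_prenex [] \<phi>) \<longleftrightarrow> sat Dist A R F s \<phi>"
proof -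
  have "finite A" "A \<noteq> {}" using assms by (auto simp: is_structure_def)
  then show ?thesis using sat_dist_guard_prenex[of A R F s "[]" \<phi>] by simp
qed

lemma L_ESO_mono:
  assumes "L_ESO Ops E C \<phi>" and "C \<subseteq> C'"
  shows "L_ESO Ops E C' \<phi>"
proof -
  have "term_ok Ops C t \<Longrightarrow> term_ok Ops C' t" for t
    using assms(2) by (induction t) auto
  then have "fm_ok Ops E C \<psi> \<Longrightarrow> fm_ok Ops E C' \<psi>" for \<psi>
    by (induction \<psi>) auto
  with assms(1) show ?thesis by (simp add: L_ESO_def)
qed

lemma L_ESO_sum_one_fms: "L_ESO {OSum} {CEq} {0, 1} (sum_one_fms fs)"
  by (induction fs) (auto simp: L_ESO_def sum_one_fms_def sum_one_fm_def)

lemma L_ESO_dist_guard: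
  "L_ESO {OSum} {CEq} {0, 1} \<phi> \<Longrightarrow> L_ESO {OSum} {CEq} {0, 1} (dist_guard \<phi>)"
  by (induction \<phi>) (auto simp: L_ESO_def sum_one_fm_def)

lemma L_ESO_dist_guard_prenex:
  "L_ESO {OSum} {CEq} {0, 1} \<phi> \<Longrightarrow> L_ESO {OSum} {CEq} {0, 1} (dist_guard_prenex fs \<phi>)"
  using L_ESO_sum_one_fms L_ESO_dist_guard
  by (induction \<phi> arbitrary: fs) (auto simp: L_ESO_def simp del: dist_guard.simps)

lemma dist_guard_qfree: "qfree \<phi> \<Longrightarrow> dist_guard \<phi> = \<phi>"
  by (induction \<phi>) auto

lemma qfree_sum_one_fms: "qfree (sum_one_fms fs) \<and> almost_conj (sum_one_fms fs)"
  by (induction fs) (auto simp: sum_one_fms_def sum_one_fm_def)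

lemma univ_prefix_dist_guard_prenex:
  "univ_prefix \<phi> \<Longrightarrow> almost_conj \<phi> \<Longrightarrow>
    univ_prefix (dist_guard_prenex fs \<phi>) \<and> almost_conj (dist_guard_prenex fs \<phi>)"
  by (induction \<phi> arbitrary: fs) (auto simp: qfree_sum_one_fms dist_guard_qfree)

lemma eso_univ_dist_guard_prenex:
  "eso_univ \<phi> \<Longrightarrow> almost_conj \<phi> \<Longrightarrow>
    eso_univ (dist_guard_prenex fs \<phi>) \<and> almost_conj (dist_guard_prenex fs \<phi>)"
proof (induction \<phi> arbitrary: fs)
  case (QAll x a)
  then show ?case using univ_prefix_dist_guard_prenex[of "QAll x a" fs] by simp
qed (auto simp: qfree_sum_one_fms dist_guard_qfree)

section \<open>Encoding [0,1]-valued functions by distributions\<close>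

definition decode :: "nat set \<Rightarrow> nat \<Rightarrow> (nat list \<Rightarrow> real) \<Rightarrow> nat list \<Rightarrow> real" where
  "decode A k d xs = real (card A) ^ k * (\<Sum>w\<in>A. d (xs @ [w, w]))"

definition row_normalised :: "nat set \<Rightarrow> nat \<Rightarrow> (nat list \<Rightarrow> real) \<Rightarrow> bool" where
  "row_normalised A k d \<longleftrightarrow>
    (\<forall>xs\<in>tuples A k. real (card A) ^ k * (\<Sum>ys\<in>tuples A 2. d (xs @ ys)) = 1)"

text \<open>Row \<open>x\<close> of \<open>encode A k g\<close> carries the mass \<open>g(x) / n\<^sup>k\<close> evenly on its \<open>n\<close> diagonal points
  and \<open>(1 - g(x)) / n\<^sup>k\<close> evenly on its \<open>n(n - 1)\<close> off-diagonal points.\<close>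

definition encode :: "nat set \<Rightarrow> nat \<Rightarrow> (nat list \<Rightarrow> real) \<Rightarrow> nat list \<Rightarrow> real" where
  "encode A k g ys =
    (if ys ! k = ys ! Suc k then g (take k ys) / real (card A) ^ Suc k
     else (1 - g (take k ys)) / (real (card A) ^ Suc k * (real (card A) - 1)))"

lemma sum_if_eq_else:
  assumes "finite A" and "a \<in> A"
  shows "(\<Sum>b\<in>A. if a = b then x else y) = x + (real (card A) - 1) * (y :: real)"
proof -
  have "(\<Sum>b\<in>A. if a = b then x else y) = x + (\<Sum>b\<in>A - {a}. if a = b then x else y)"
    by (simp add: sum.remove[OF assms])
  also have "\<dots> = x + (\<Sum>b\<in>A - {a}. y)"
    by (intro arg_cong2[where f = "(+)"] sum.cong) auto
  also have "\<dots> = x + (real (card A) - 1) * y"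
  proof -
    have "1 \<le> card A" using assms by (auto simp: Suc_le_eq card_gt_0_iff)
    with assms show ?thesis by (simp add: of_nat_diff)
  qed
  finally show ?thesis .
qed

lemma decode_encode:
  assumes "finite A" and "2 \<le> card A" and "length xs = k"
  shows "decode A k (encode A k g) xs = g xs"
proof -
  have "encode A k g (xs @ [w, w]) = g xs / real (card A) ^ Suc k" for w
    using assms(3) by (simp add: encode_def nth_append)
  then show ?thesis using assms(2) by (simp add: decode_def)
qed

lemma sum_encode_row:
  assumes fin: "finite A" and n2: "2 \<le> card A" and xs: "xs \<in> tuples A k"
  shows "(\<Sum>ys\<in>tuples A 2. encode A k g (xs @ ys)) = 1 / real (card A) ^ k"
proof -
  let ?n = "real (card A)"
  have "encode A k g (xs @ [a, b]) =
      (if a = b then g xs / ?n ^ Suc k else (1 - g xs) / (?n ^ Suc k * (?n - 1)))" for a b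
    using length_tuples[OF xs] by (simp add: encode_def nth_append)
  then have "(\<Sum>ys\<in>tuples A 2. encode A k g (xs @ ys)) =
      (\<Sum>a\<in>A. g xs / ?n ^ Suc k + (?n - 1) * ((1 - g xs) / (?n ^ Suc k * (?n - 1))))"
    by (simp add: sum_tuples_2[OF fin] sum_if_eq_else[OF fin])
  also have "\<dots> = (\<Sum>a\<in>A. 1 / ?n ^ Suc k)"
  proof -
    have frac: "G / P + c * ((1 - G) / (P * c)) = 1 / P" if "c \<noteq> 0" "P \<noteq> 0" for G P c :: real
      using that by (simp add: field_simps)
    have "?n - 1 \<noteq> 0" "?n ^ Suc k \<noteq> 0" using n2 by auto
    from frac[OF this] show ?thesis by (simp only:)
  qed
  also have "\<dots> = 1 / ?n ^ k"
    using n2 by simp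
  finally show ?thesis .
qed

lemma admissible_encode:
  assumes fin: "finite A" and n2: "2 \<le> card A" and g: "admissible (ValsIn {0..1}) A k g"
  shows "admissible Dist A (k + 2) (encode A k g)" and "row_normalised A k (encode A k g)"
proof -
  have nonneg: "0 \<le> encode A k g ys" if ys: "ys \<in> tuples A (k + 2)" for ys
  proof -
    have "take k ys \<in> tuples A k" using ys set_take_subset[of k ys] by (auto simp: tuples_def)
    then have "g (take k ys) \<in> {0..1}" using g by (auto simp: admissible_def)
    then show ?thesis using n2 by (auto simp: encode_def)
  qed
  have "(\<Sum>ys\<in>tuples A (k + 2). encode A k g ys) =
      (\<Sum>xs\<in>tuples A k. \<Sum>ys\<in>tuples A 2. encode A k g (xs @ ys))"
    by (rule sum_tuples_add[OF fin])
  also have "\<dots> = (\<Sum>xs\<in>tuples A k. 1 / real (card A) ^ k)"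
    by (rule sum.cong) (simp_all add: sum_encode_row[OF fin n2])
  also have "\<dots> = 1"
    using n2 by (simp add: card_tuples[OF fin])
  finally show "admissible Dist A (k + 2) (encode A k g)" using nonneg by (simp add: admissible_def)
  show "row_normalised A k (encode A k g)"
    using n2 by (simp add: row_normalised_def sum_encode_row[OF fin n2])
qed

lemma admissible_decode:
  assumes fin: "finite A" and d: "admissible Dist A (k + 2) d" and row: "row_normalised A k d"
  shows "admissible (ValsIn {0..1}) A k (decode A k d)"
  unfolding admissible_def
proof (simp, intro ballI conjI)
  fix xs assume xs: "xs \<in> tuples A k"
  have nonneg: "0 \<le> d (xs @ [a, b])" if "a \<in> A" "b \<in> A" for a b
    using d xs that by (auto simp: admissible_def tuples_def)
  then show "0 \<le> decode A k d xs" by (simp add: decode_def sum_nonneg)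
  have "(\<Sum>w\<in>A. d (xs @ [w, w])) \<le> (\<Sum>a\<in>A. \<Sum>b\<in>A. d (xs @ [a, b]))"
    by (intro sum_mono member_le_sum) (use nonneg fin in auto)
  then have "decode A k d xs \<le> real (card A) ^ k * (\<Sum>ys\<in>tuples A 2. d (xs @ ys))"
    unfolding decode_def sum_tuples_2[OF fin] by (rule mult_left_mono) simp
  also have "\<dots> = 1" using row xs by (simp add: row_normalised_def)
  finally show "decode A k d xs \<le> 1" .
qed

section \<open>Simulating constants and [0,1]-quantifiers with distributions\<close>

text \<open>For \<open>N\<close> above all names of the input formula, \<open>one_sym N\<close> is interpreted by the unique nullary
  distribution and thus stands for the constant 1, \<open>offdiag_sym N\<close> by a binary distribution
  vanishing on the diagonal, and \<open>code_sym N f\<close> by a distribution whose \<open>decode\<close> is \<open>f\<close>.\<close>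

definition code_sym :: "nat \<Rightarrow> fname \<Rightarrow> fname" where
  "code_sym N f = (N + Suc (fst f), snd f + 2)"

abbreviation one_sym :: "nat \<Rightarrow> fname" where
  "one_sym N \<equiv> (N, 0)"

abbreviation offdiag_sym :: "nat \<Rightarrow> fname" where
  "offdiag_sym N \<equiv> (N, 2)"

lemma snd_code_sym [simp]: "snd (code_sym N f) = snd f + 2"
  by (simp add: code_sym_def)

lemma code_sym_inject [simp]: "code_sym N g = code_sym N f \<longleftrightarrow> g = f"
  by (auto simp: code_sym_def prod_eq_iff)

lemma code_sym_fresh [simp]:
  "fst g < N \<Longrightarrow> g \<noteq> code_sym N f" "one_sym N \<noteq> code_sym N f" "offdiag_sym N \<noteq> code_sym N f"
  by (auto simp: code_sym_def)

definition decoded :: "nat \<Rightarrow> nat set \<Rightarrow> fname set \<Rightarrow> (fname \<Rightarrow> nat list \<Rightarrow> real) \<Rightarrow> fname \<Rightarrow> nat list \<Rightarrow> real"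
  where "decoded N A env F g = (if g \<in> env then decode A (snd g) (F (code_sym N g)) else F g)"

lemma decoded_empty [simp]: "decoded N A {} F = F"
  by (simp add: decoded_def fun_eq_iff)

lemma agree_on_decoded_insert:
  assumes "\<forall>g\<in>S. fst g < N"
  shows "agree_on S (decoded N A (insert f env) (F(code_sym N f := d)))
    ((decoded N A env F)(f := decode A (snd f) d))"
  using assms by (auto simp: agree_on_def decoded_def)

text \<open>An application \<open>g(xs)\<close> of a simulated \<open>g\<close> becomes a sum over \<open>k + 1\<close> variables above \<open>xs\<close>
  of \<open>code_sym N g (xs, m, m)\<close>: the \<open>k\<close> unused summation variables contribute the factor \<open>n\<^sup>k\<close> of
  \<open>decode\<close>.\<close>

fun elim_term :: "nat \<Rightarrow> fname set \<Rightarrow> nterm \<Rightarrow> nterm" where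
  "elim_term N env (NConst c) = (if c = 0 then NApp (offdiag_sym N) [0, 0] else NApp (one_sym N) [])"
| "elim_term N env (NApp g xs) =
    (if g \<in> env then NSum [Suc (sum_list xs)..<Suc (sum_list xs) + Suc (snd g)]
       (NApp (code_sym N g) (xs @ [Suc (sum_list xs), Suc (sum_list xs)]))
     else NApp g xs)"
| "elim_term N env (NPlus i j) = NPlus (elim_term N env i) (elim_term N env j)"
| "elim_term N env (NTimes i j) = NTimes (elim_term N env i) (elim_term N env j)"
| "elim_term N env (NSum ys i) = NSum ys (elim_term N env i)"

lemma teval_decode:
  assumes fin: "finite A" and xs: "\<forall>x\<in>set xs. x < m"
  shows "teval A F s (NSum [m..<m + Suc k] (NApp d (xs @ [m, m]))) = decode A k (F d) (map s xs)"
proof -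
  let ?ys = "[m..<m + Suc k]"
  have args: "map (upds s ?ys as) (xs @ [m, m]) = map s xs @ [as ! 0, as ! 0]"
    if "as \<in> tuples A (Suc k)" for as
  proof -
    have "upds s ?ys as (?ys ! 0) = as ! 0" using that by (intro upds_nth) (auto simp: length_tuples)
    moreover have "map (upds s ?ys as) xs = map s xs" using xs by (auto simp: upds_notin)
    ultimately show ?thesis by (simp del: upt_Suc)
  qed
  have "teval A F s (NSum ?ys (NApp d (xs @ [m, m]))) =
      (\<Sum>as\<in>tuples A (Suc k). F d (map (upds s ?ys as) (xs @ [m, m])))"
    by (simp del: upt_Suc)
  also have "\<dots> = (\<Sum>as\<in>tuples A (Suc k). (\<lambda>w. F d (map s xs @ [w, w])) (as ! 0))"
    by (rule sum.cong[OF refl]) (simp only: args)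
  also have "\<dots> = decode A k (F d) (map s xs)"
    using sum_tuples_nth_0[OF fin, where h = "\<lambda>w. F d (map s xs @ [w, w])"] by (simp add: decode_def)
  finally show ?thesis .
qed

lemma teval_elim_term:
  assumes fin: "finite A" and one: "F (one_sym N) [] = 1"
    and offdiag: "\<forall>a\<in>A. F (offdiag_sym N) [a, a] = 0"
  shows "\<forall>x. s x \<in> A \<Longrightarrow> term_ok Ops {0, 1} t \<Longrightarrow>
    teval A F s (elim_term N env t) = teval A (decoded N A env F) s t"
proof (induction t arbitrary: s)
  case (NConst c)
  then show ?case using one offdiag by auto
next
  case (NApp g xs)
  have "\<forall>x\<in>set xs. x < Suc (sum_list xs)"
    using member_le_sum_list[of _ xs] by (auto simp: le_imp_less_Suc)
  from teval_decode[OF fin this] show ?case by (simp add: decoded_def del: upt_Suc)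
next
  case (NSum ys i)
  then have "teval A F (upds s ys as) (elim_term N env i) = teval A (decoded N A env F) (upds s ys as) i"
    if "as \<in> tuples A (length ys)" for as
    using that by (intro NSum.IH) (auto intro: upds_in dest: set_tuples)
  then show ?case by simp
qed auto

definition row_fm :: "nat \<Rightarrow> nat \<Rightarrow> fname \<Rightarrow> fm" where
  "row_fm N V f = NumAt CEq
    (NSum [V + snd f..<V + snd f + snd f + 2]
      (NApp (code_sym N f) ([V..<V + snd f] @ [V + snd f + snd f, V + snd f + snd f + 1])))
    (NApp (one_sym N) [])"

definition row_fm_all :: "nat \<Rightarrow> fname \<Rightarrow> fm" where
  "row_fm_all N f = foldr QAll [0..<snd f] (row_fm N 0 f)"

lemma sat_row_fm:
  assumes fin: "finite A"
  shows "sat Q A R F s (row_fm N V f) \<longleftrightarrow>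
    real (card A) ^ snd f * (\<Sum>ys\<in>tuples A 2. F (code_sym N f) (map s [V..<V + snd f] @ ys))
      = F (one_sym N) []"
proof -
  let ?k = "snd f"
  let ?ys = "[V + ?k..<V + ?k + ?k + 2]"
  let ?args = "[V..<V + ?k] @ [V + ?k + ?k, V + ?k + ?k + 1]"
  have args: "map (upds s ?ys as) ?args = map s [V..<V + ?k] @ drop ?k as"
    if "as \<in> tuples A (?k + 2)" for as
  proof -
    have "?args = [V..<V + ?k] @ drop ?k ?ys" by (simp add: numeral_2_eq_2)
    moreover have "map (upds s ?ys as) ?ys = as"
      using that by (intro map_upds) (simp_all add: length_tuples del: upt_Suc)
    moreover have "map (upds s ?ys as) [V..<V + ?k] = map s [V..<V + ?k]" by (simp add: upds_notin)
    ultimately show ?thesis by (metis drop_map map_append)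
  qed
  have "teval A F s (NSum ?ys (NApp (code_sym N f) ?args)) =
      (\<Sum>as\<in>tuples A (?k + 2). F (code_sym N f) (map (upds s ?ys as) ?args))"
    by (simp add: numeral_2_eq_2)
  also have "\<dots> = (\<Sum>as\<in>tuples A (?k + 2). (\<lambda>ys. F (code_sym N f) (map s [V..<V + ?k] @ ys)) (drop ?k as))"
    by (rule sum.cong[OF refl]) (simp only: args)
  also have "\<dots> = real (card A) ^ ?k * (\<Sum>ys\<in>tuples A 2. F (code_sym N f) (map s [V..<V + ?k] @ ys))"
    by (rule sum_tuples_drop[OF fin])
  finally show ?thesis by (simp add: row_fm_def)
qed

lemma sat_row_fm_all:
  assumes "finite A" and "F (one_sym N) [] = 1"
  shows "sat Q A R F s (row_fm_all N f) \<longleftrightarrow> row_normalised A (snd f) (F (code_sym N f))"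
proof -
  have "map (upds s [0..<snd f] as) [0..<snd f] = as" if "as \<in> tuples A (snd f)" for as
    using that by (simp add: map_upds length_tuples)
  then show ?thesis
    using assms(2) by (simp add: row_fm_all_def sat_foldr_QAll sat_row_fm[OF assms(1)] row_normalised_def)
qed

lemma ex_decode_iff:
  assumes fin: "finite A" and n2: "2 \<le> card A" and ok: "fm_ok Ops E C \<phi>"
  shows "(\<exists>d. admissible Dist A (snd f + 2) d \<and> row_normalised A (snd f) d \<and>
      sat (ValsIn {0..1}) A R (H(f := decode A (snd f) d)) s \<phi>)
    \<longleftrightarrow> (\<exists>g. admissible (ValsIn {0..1}) A (snd f) g \<and> sat (ValsIn {0..1}) A R (H(f := g)) s \<phi>)"
proof
  assume "\<exists>d. admissible Dist A (snd f + 2) d \<and> row_normalised A (snd f) d \<and>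
      sat (ValsIn {0..1}) A R (H(f := decode A (snd f) d)) s \<phi>"
  then show "\<exists>g. admissible (ValsIn {0..1}) A (snd f) g \<and> sat (ValsIn {0..1}) A R (H(f := g)) s \<phi>"
    using admissible_decode[OF fin] by blast
next
  assume "\<exists>g. admissible (ValsIn {0..1}) A (snd f) g \<and> sat (ValsIn {0..1}) A R (H(f := g)) s \<phi>"
  then obtain g where g: "admissible (ValsIn {0..1}) A (snd f) g"
    and sat_g: "sat (ValsIn {0..1}) A R (H(f := g)) s \<phi>" by blast
  have "agree_on (fnames \<phi>) (H(f := decode A (snd f) (encode A (snd f) g))) (H(f := g))"
    using decode_encode[OF fin n2] by (auto simp: agree_on_def)
  with sat_g have "sat (ValsIn {0..1}) A R (H(f := decode A (snd f) (encode A (snd f) g))) s \<phi>"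
    using sat_cong_fnames[OF ok] by blast
  then show "\<exists>d. admissible Dist A (snd f + 2) d \<and> row_normalised A (snd f) d \<and>
      sat (ValsIn {0..1}) A R (H(f := decode A (snd f) d)) s \<phi>"
    using admissible_encode[OF fin n2 g] by blast
qed

fun elim :: "nat \<Rightarrow> fname set \<Rightarrow> fm \<Rightarrow> fm" where
  "elim N env (NumAt c i j) = NumAt c (elim_term N env i) (elim_term N env j)"
| "elim N env (NegNumAt c i j) = NegNumAt c (elim_term N env i) (elim_term N env j)"
| "elim N env (Conj a b) = Conj (elim N env a) (elim N env b)"
| "elim N env (Disj a b) = Disj (elim N env a) (elim N env b)"
| "elim N env (QEx x a) = QEx x (elim N env a)"
| "elim N env (QAll x a) = QAll x (elim N env a)"
| "elim N env (FEx f a) = FEx (code_sym N f) (Conj (row_fm_all N f) (elim N (insert f env) a))"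
| "elim N env a = a"

lemma sat_elim:
  assumes fin: "finite A" and n2: "2 \<le> card A"
  shows "\<forall>x. s x \<in> A \<Longrightarrow> F (one_sym N) [] = 1 \<Longrightarrow> \<forall>a\<in>A. F (offdiag_sym N) [a, a] = 0 \<Longrightarrow>
    \<forall>g\<in>fnames \<phi>. fst g < N \<Longrightarrow> fm_ok Ops E {0, 1} \<phi> \<Longrightarrow>
    sat Dist A R F s (elim N env \<phi>) \<longleftrightarrow> sat (ValsIn {0..1}) A R (decoded N A env F) s \<phi>"
proof (induction \<phi> arbitrary: env F s)
  case (NumAt c i j)
  then show ?case
    using teval_elim_term[OF fin, of F N s Ops i env] teval_elim_term[OF fin, of F N s Ops j env] by simp
next
  case (NegNumAt c i j)
  then show ?case
    using teval_elim_term[OF fin, of F N s Ops i env] teval_elim_term[OF fin, of F N s Ops j env] by simp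
next
  case (QEx x a)
  then have "sat Dist A R F (s(x := v)) (elim N env a) \<longleftrightarrow>
      sat (ValsIn {0..1}) A R (decoded N A env F) (s(x := v)) a" if "v \<in> A" for v
    using that by (intro QEx.IH) auto
  then show ?case by simp
next
  case (QAll x a)
  then have "sat Dist A R F (s(x := v)) (elim N env a) \<longleftrightarrow>
      sat (ValsIn {0..1}) A R (decoded N A env F) (s(x := v)) a" if "v \<in> A" for v
    using that by (intro QAll.IH) auto
  then show ?case by simp
next
  case (FEx f a)
  have fresh: "\<forall>g\<in>fnames a. fst g < N" and ok: "fm_ok Ops E {0, 1} a" using FEx.prems by auto
  have body: "sat Dist A R (F(code_sym N f := d)) s (elim N (insert f env) a) \<longleftrightarrow>
      sat (ValsIn {0..1}) A R ((decoded N A env F)(f := decode A (snd f) d)) s a" for d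
  proof -
    have "sat Dist A R (F(code_sym N f := d)) s (elim N (insert f env) a) \<longleftrightarrow>
        sat (ValsIn {0..1}) A R (decoded N A (insert f env) (F(code_sym N f := d))) s a"
      using FEx.prems by (intro FEx.IH) auto
    also have "\<dots> \<longleftrightarrow> sat (ValsIn {0..1}) A R ((decoded N A env F)(f := decode A (snd f) d)) s a"
      by (rule sat_cong_fnames[OF ok agree_on_decoded_insert[OF fresh]])
    finally show ?thesis .
  qed
  have row: "sat Dist A R (F(code_sym N f := d)) s (row_fm_all N f) \<longleftrightarrow> row_normalised A (snd f) d" for d
    using FEx.prems(2) by (simp add: sat_row_fm_all[OF fin])
  have "sat Dist A R F s (elim N env (FEx f a)) \<longleftrightarrow> (\<exists>d. admissible Dist A (snd f + 2) d \<and>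
      row_normalised A (snd f) d \<and>
      sat (ValsIn {0..1}) A R ((decoded N A env F)(f := decode A (snd f) d)) s a)"
    by (simp only: elim.simps sat.simps snd_code_sym body row)
  also have "\<dots> \<longleftrightarrow> sat (ValsIn {0..1}) A R (decoded N A env F) s (FEx f a)"
    by (simp only: sat.simps ex_decode_iff[OF fin n2 ok])
  finally show ?case .
qed simp_all

definition diag_zero_fm :: "nat \<Rightarrow> nat \<Rightarrow> fm" where
  "diag_zero_fm N V =
    NumAt CEq (NSum [Suc V] (NApp (offdiag_sym N) [V, V])) (NApp (offdiag_sym N) [V, V])"

definition row_fms :: "nat \<Rightarrow> nat \<Rightarrow> fname list \<Rightarrow> fm" where
  "row_fms N V fs = foldr (\<lambda>f \<phi>. Conj (row_fm N V f) \<phi>) fs (VEq 0 0)"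

text \<open>As in \<open>dist_guard_prenex\<close>, the row conditions of the leading quantifiers are deferred to
  the matrix. They are checked under \<open>K\<close> fresh universal variables \<open>V, \<dots>, V + K - 1\<close>, whose
  initial segments serve as the row indices.\<close>

definition elim_matrix :: "nat \<Rightarrow> nat \<Rightarrow> nat \<Rightarrow> fname list \<Rightarrow> fm \<Rightarrow> fm" where
  "elim_matrix N V K fs \<phi> =
    foldr QAll [V..<V + K] (Conj (Conj (diag_zero_fm N V) (row_fms N V fs)) (elim N (set fs) \<phi>))"

fun elim_prenex :: "nat \<Rightarrow> nat \<Rightarrow> nat \<Rightarrow> fname list \<Rightarrow> fm \<Rightarrow> fm" where
  "elim_prenex N V K fs (FEx f a) = FEx (code_sym N f) (elim_prenex N V K (f # fs) a)"
| "elim_prenex N V K fs (QAll x a) = QAll x (elim_prenex N V K fs a)"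
| "elim_prenex N V K fs a = elim_matrix N V K fs a"

lemma sat_diag_zero_fm:
  assumes "finite A" and "2 \<le> card A"
  shows "sat Q A R F s (diag_zero_fm N V) \<longleftrightarrow> F (offdiag_sym N) [s V, s V] = 0"
proof -
  have "teval A F s (NSum [Suc V] (NApp (offdiag_sym N) [V, V])) =
      real (card A) * F (offdiag_sym N) [s V, s V]"
    using assms(1) by (simp add: upds_notin card_tuples)
  moreover have "real (card A) \<noteq> 1" using assms(2) by simp
  ultimately show ?thesis by (auto simp: diag_zero_fm_def)
qed

lemma sat_row_fms: "sat Q A R F s (row_fms N V fs) \<longleftrightarrow> (\<forall>f\<in>set fs. sat Q A R F s (row_fm N V f))"
  by (induction fs) (auto simp: row_fms_def)

lemma sat_elim_matrix:
  assumes fin: "finite A" and n2: "2 \<le> card A"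
    and sA: "\<forall>x. s x \<in> A" and one: "F (one_sym N) [] = 1" and fresh: "\<forall>g\<in>fnames \<phi>. fst g < N"
    and ok: "fm_ok Ops E {0, 1} \<phi>" and vars: "\<forall>x\<in>vars \<phi>. x < V" and K: "1 \<le> K"
    and arity: "\<forall>h\<in>set fs. snd h \<le> K"
  shows "sat Dist A R F s (elim_matrix N V K fs \<phi>) \<longleftrightarrow>
    (\<forall>a\<in>A. F (offdiag_sym N) [a, a] = 0) \<and>
    (\<forall>h\<in>set fs. row_normalised A (snd h) (F (code_sym N h))) \<and>
    sat (ValsIn {0..1}) A R (decoded N A (set fs) F) s \<phi>"
proof -
  let ?vs = "[V..<V + K]"
  let ?E = "\<forall>a\<in>A. F (offdiag_sym N) [a, a] = 0"
  let ?row = "\<lambda>h xs. real (card A) ^ snd h * (\<Sum>ys\<in>tuples A 2. F (code_sym N h) (xs @ ys)) = 1"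
  let ?S = "sat (ValsIn {0..1}) A R (decoded N A (set fs) F) s \<phi>"
  have ne: "A \<noteq> {}" using n2 by auto
  have body: "sat Dist A R F (upds s ?vs as)
      (Conj (Conj (diag_zero_fm N V) (row_fms N V fs)) (elim N (set fs) \<phi>)) \<longleftrightarrow>
    F (offdiag_sym N) [as ! 0, as ! 0] = 0 \<and> (\<forall>h\<in>set fs. ?row h (take (snd h) as)) \<and>
    sat Dist A R F (upds s ?vs as) (elim N (set fs) \<phi>)" if as: "as \<in> tuples A K" for as
  proof -
    have len: "length as = K" using as by (rule length_tuples)
    then have "upds s ?vs as V = as ! 0" using upds_nth[of ?vs as 0 s] K by simp
    with len show ?thesis using arity one
      by (simp add: sat_diag_zero_fm[OF fin n2] sat_row_fms sat_row_fm[OF fin] map_upds_upt_take)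
  qed
  have diag: "(\<forall>as\<in>tuples A K. F (offdiag_sym N) [as ! 0, as ! 0] = 0) \<longleftrightarrow> ?E"
    by (rule ball_tuples_nth_0[OF K ne])
  have rows: "(\<forall>as\<in>tuples A K. \<forall>h\<in>set fs. ?row h (take (snd h) as)) \<longleftrightarrow>
      (\<forall>h\<in>set fs. row_normalised A (snd h) (F (code_sym N h)))"
  proof -
    have "(\<forall>as\<in>tuples A K. ?row h (take (snd h) as)) \<longleftrightarrow> (\<forall>xs\<in>tuples A (snd h). ?row h xs)"
      if "h \<in> set fs" for h
      using ball_tuples_take[OF _ ne, of "snd h" K "?row h"] arity that by blast
    then show ?thesis unfolding row_normalised_def by blast
  qed
  have elim: "sat Dist A R F (upds s ?vs as) (elim N (set fs) \<phi>) \<longleftrightarrow> ?S"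
    if ?E and as: "as \<in> tuples A K" for as
  proof -
    have "sat Dist A R F (upds s ?vs as) (elim N (set fs) \<phi>) \<longleftrightarrow>
        sat (ValsIn {0..1}) A R (decoded N A (set fs) F) (upds s ?vs as) \<phi>"
      by (rule sat_elim[OF fin n2 _ one \<open>?E\<close> fresh ok])
        (use sA as in \<open>auto intro: upds_in dest: set_tuples\<close>)
    also have "\<dots> \<longleftrightarrow> ?S"
      by (rule sat_cong_vars) (use vars in \<open>auto simp: upds_notin\<close>)
    finally show ?thesis .
  qed
  have "sat Dist A R F s (elim_matrix N V K fs \<phi>) \<longleftrightarrow> (\<forall>as\<in>tuples A K.
      F (offdiag_sym N) [as ! 0, as ! 0] = 0 \<and> (\<forall>h\<in>set fs. ?row h (take (snd h) as)) \<and>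
      sat Dist A R F (upds s ?vs as) (elim N (set fs) \<phi>))"
    unfolding elim_matrix_def sat_foldr_QAll using body by simp
  also have "\<dots> \<longleftrightarrow> ?E \<and> (\<forall>h\<in>set fs. row_normalised A (snd h) (F (code_sym N h))) \<and> ?S"
    using diag rows elim tuples_nonempty[OF ne, of K] by blast
  finally show ?thesis .
qed

lemma ex_decode_prefix_iff:
  assumes fin: "finite A" and n2: "2 \<le> card A" and ok: "fm_ok Ops E C \<phi>"
  shows "(\<exists>d. admissible Dist A (snd f + 2) d \<and> P \<and>
      ((f \<notin> prefix_fnames \<phi> \<longrightarrow> row_normalised A (snd f) d) \<and> Q) \<and>
      sat (ValsIn {0..1}) A R (H(f := decode A (snd f) d)) s \<phi>)
    \<longleftrightarrow> P \<and> Q \<and> sat (ValsIn {0..1}) A R H s (FEx f \<phi>)"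
proof (cases "f \<in> prefix_fnames \<phi>")
  case True
  then have "sat (ValsIn {0..1}) A R (H(f := g)) s \<phi> \<longleftrightarrow> sat (ValsIn {0..1}) A R H s \<phi>" for g
    by (rule sat_fun_upd_prefix_fname)
  moreover have "A \<noteq> {}" using n2 by auto
  ultimately show ?thesis
    using True ex_admissible_unit[of A "snd f"] ex_admissible_Dist[OF fin, of "snd f + 2"] by auto
next
  case False
  with ex_decode_iff[OF fin n2 ok, of f R H s] show ?thesis by auto
qed

lemma sat_elim_prenex:
  assumes fin: "finite A" and n2: "2 \<le> card A"
  shows "\<forall>x. s x \<in> A \<Longrightarrow> F (one_sym N) [] = 1 \<Longrightarrow> \<forall>g\<in>fnames \<phi>. fst g < N \<Longrightarrow>
    fm_ok Ops E {0, 1} \<phi> \<Longrightarrow> \<forall>x\<in>vars \<phi>. x < V \<Longrightarrow> 1 \<le> K \<Longrightarrow>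
    \<forall>h\<in>set fs \<union> prefix_fnames \<phi>. snd h \<le> K \<Longrightarrow>
    sat Dist A R F s (elim_prenex N V K fs \<phi>) \<longleftrightarrow>
      (\<forall>a\<in>A. F (offdiag_sym N) [a, a] = 0) \<and>
      (\<forall>h\<in>set fs - prefix_fnames \<phi>. row_normalised A (snd h) (F (code_sym N h))) \<and>
      sat (ValsIn {0..1}) A R (decoded N A (set fs) F) s \<phi>"
proof (induction \<phi> arbitrary: fs F s)
  case (QAll x a)
  have step: "sat Dist A R F (s(x := v)) (elim_prenex N V K fs a) \<longleftrightarrow>
      (\<forall>a\<in>A. F (offdiag_sym N) [a, a] = 0) \<and>
      (\<forall>h\<in>set fs - prefix_fnames a. row_normalised A (snd h) (F (code_sym N h))) \<and>
      sat (ValsIn {0..1}) A R (decoded N A (set fs) F) (s(x := v)) a" if "v \<in> A" for v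
    using that QAll.prems by (intro QAll.IH) auto
  then have "(\<forall>v\<in>A. sat Dist A R F (s(x := v)) (elim_prenex N V K fs a)) \<longleftrightarrow>
      (\<forall>v\<in>A. (\<forall>a\<in>A. F (offdiag_sym N) [a, a] = 0) \<and>
        (\<forall>h\<in>set fs - prefix_fnames a. row_normalised A (snd h) (F (code_sym N h))) \<and>
        sat (ValsIn {0..1}) A R (decoded N A (set fs) F) (s(x := v)) a)"
    by (rule ball_cong[OF refl])
  moreover have "A \<noteq> {}" using n2 by auto
  ultimately show ?case by (simp only: sat.simps prefix_fnames.simps elim_prenex.simps) blast
next
  case (FEx f a)
  let ?E = "\<forall>a\<in>A. F (offdiag_sym N) [a, a] = 0"
  let ?H = "decoded N A (set fs) F"
  let ?rows = "\<forall>h\<in>set fs - prefix_fnames (FEx f a). row_normalised A (snd h) (F (code_sym N h))"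
  have fresh: "\<forall>g\<in>fnames a. fst g < N" and ok: "fm_ok Ops E {0, 1} a" using FEx.prems by auto
  have IH: "sat Dist A R (F(code_sym N f := d)) s (elim_prenex N V K (f # fs) a) \<longleftrightarrow>
      ?E \<and> (\<forall>h\<in>set (f # fs) - prefix_fnames a.
              row_normalised A (snd h) ((F(code_sym N f := d)) (code_sym N h))) \<and>
      sat (ValsIn {0..1}) A R (?H(f := decode A (snd f) d)) s a" for d
  proof -
    have "sat Dist A R (F(code_sym N f := d)) s (elim_prenex N V K (f # fs) a) \<longleftrightarrow>
        (\<forall>a\<in>A. (F(code_sym N f := d)) (offdiag_sym N) [a, a] = 0) \<and>
        (\<forall>h\<in>set (f # fs) - prefix_fnames a.
          row_normalised A (snd h) ((F(code_sym N f := d)) (code_sym N h))) \<and>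
        sat (ValsIn {0..1}) A R (decoded N A (set (f # fs)) (F(code_sym N f := d))) s a"
      using FEx.prems by (intro FEx.IH) auto
    then show ?thesis
      using sat_cong_fnames[OF ok agree_on_decoded_insert[OF fresh]] by simp
  qed
  have guards: "(\<forall>h\<in>set (f # fs) - prefix_fnames a.
        row_normalised A (snd h) ((F(code_sym N f := d)) (code_sym N h))) \<longleftrightarrow>
      (f \<notin> prefix_fnames a \<longrightarrow> row_normalised A (snd f) d) \<and> ?rows" for d
    by auto
  have lhs: "sat Dist A R F s (elim_prenex N V K fs (FEx f a)) \<longleftrightarrow>
      (\<exists>d. admissible Dist A (snd f + 2) d \<and> ?E \<and>
        ((f \<notin> prefix_fnames a \<longrightarrow> row_normalised A (snd f) d) \<and> ?rows) \<and>
        sat (ValsIn {0..1}) A R (?H(f := decode A (snd f) d)) s a)"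
    by (simp only: elim_prenex.simps sat.simps snd_code_sym IH guards)
  show ?case
    unfolding lhs by (rule ex_decode_prefix_iff[OF fin n2 ok])
qed (simp_all add: sat_elim_matrix[OF fin n2])

definition fresh_name :: "fm \<Rightarrow> nat" where
  "fresh_name \<phi> = Suc (Max (insert 0 (fst ` fnames \<phi>)))"

definition fresh_var :: "fm \<Rightarrow> nat" where
  "fresh_var \<phi> = Suc (Max (insert 0 (vars \<phi>)))"

definition arity_bound :: "fm \<Rightarrow> nat" where
  "arity_bound \<phi> = Suc (Max (insert 0 (snd ` fnames \<phi>)))"

lemma fresh_name_gt: "g \<in> fnames \<phi> \<Longrightarrow> fst g < fresh_name \<phi>"
  unfolding fresh_name_def using finite_fnames[of \<phi>] by (simp add: le_imp_less_Suc)

lemma fresh_var_gt: "x \<in> vars \<phi> \<Longrightarrow> x < fresh_var \<phi>"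
  unfolding fresh_var_def using finite_vars[of \<phi>] by (simp add: le_imp_less_Suc)

lemma arity_bound_ge: "g \<in> fnames \<phi> \<Longrightarrow> snd g \<le> arity_bound \<phi>"
  unfolding arity_bound_def using finite_fnames[of \<phi>] by (simp add: le_SucI)

definition dist_encoding :: "fm \<Rightarrow> fm" where
  "dist_encoding \<phi> = FEx (one_sym (fresh_name \<phi>)) (FEx (offdiag_sym (fresh_name \<phi>))
    (elim_prenex (fresh_name \<phi>) (fresh_var \<phi>) (arity_bound \<phi>) [] \<phi>))"

definition offdiag_uniform :: "nat set \<Rightarrow> nat list \<Rightarrow> real" where
  "offdiag_uniform A xs = (if xs ! 0 = xs ! 1 then 0 else 1 / (real (card A) * (real (card A) - 1)))"

lemma admissible_offdiag_uniform:
  assumes fin: "finite A" and n2: "2 \<le> card A"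
  shows "admissible Dist A 2 (offdiag_uniform A)"
proof -
  let ?n = "real (card A)"
  have "(\<Sum>xs\<in>tuples A 2. offdiag_uniform A xs) = (\<Sum>a\<in>A. \<Sum>b\<in>A. if a = b then 0 else 1 / (?n * (?n - 1)))"
    by (simp add: sum_tuples_2[OF fin] offdiag_uniform_def)
  also have "\<dots> = ?n * ((?n - 1) * (1 / (?n * (?n - 1))))"
    by (simp add: sum_if_eq_else[OF fin])
  also have "\<dots> = 1" using n2 by simp
  finally show ?thesis using n2 by (simp add: admissible_def offdiag_uniform_def)
qed

lemma sat_dist_encoding:
  assumes st: "is_structure X A F" and sA: "\<forall>x. s x \<in> A" and ok: "fm_ok Ops E {0, 1} \<phi>"
  shows "sat Dist A R F s (dist_encoding \<phi>) \<longleftrightarrow> sat (ValsIn {0..1}) A R F s \<phi>"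
proof -
  let ?N = "fresh_name \<phi>"
  have fin: "finite A" and n2: "2 \<le> card A" using st by (auto simp: is_structure_def)
  have fresh: "\<forall>g\<in>fnames \<phi>. fst g < ?N" using fresh_name_gt by blast
  have matrix: "sat Dist A R (F(one_sym ?N := u, offdiag_sym ?N := e)) s
        (elim_prenex ?N (fresh_var \<phi>) (arity_bound \<phi>) [] \<phi>) \<longleftrightarrow>
      (\<forall>a\<in>A. e [a, a] = 0) \<and> sat (ValsIn {0..1}) A R F s \<phi>"
    if u: "admissible Dist A 0 u" for u e
  proof -
    have "agree_on (fnames \<phi>) (F(one_sym ?N := u, offdiag_sym ?N := e)) F"
      using fresh by (auto simp: agree_on_def)
    moreover have "\<forall>h\<in>prefix_fnames \<phi>. snd h \<le> arity_bound \<phi>"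
      using arity_bound_ge prefix_fnames_subset by blast
    ultimately show ?thesis
      using u sA ok fresh fresh_var_gt
      by (simp add: sat_elim_prenex[OF fin n2] sat_cong_fnames[OF ok] admissible_def arity_bound_def)
  qed
  have "sat Dist A R F s (dist_encoding \<phi>) \<longleftrightarrow> (\<exists>u. admissible Dist A 0 u \<and> (\<exists>e. admissible Dist A 2 e \<and>
      (\<forall>a\<in>A. e [a, a] = 0) \<and> sat (ValsIn {0..1}) A R F s \<phi>))"
    unfolding dist_encoding_def sat.simps using matrix by auto
  moreover have "admissible Dist A 0 (\<lambda>_. 1)" by (simp add: admissible_def)
  moreover have "\<forall>a\<in>A. offdiag_uniform A [a, a] = 0" by (simp add: offdiag_uniform_def)
  ultimately show ?thesis using admissible_offdiag_uniform[OF fin n2] by blast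
qed

lemma fm_ok_foldr_QAll [simp]: "fm_ok Ops E C (foldr QAll xs \<phi>) \<longleftrightarrow> fm_ok Ops E C \<phi>"
  by (induction xs) auto

lemma no_negnum_foldr_QAll [simp]: "no_negnum (foldr QAll xs \<phi>) \<longleftrightarrow> no_negnum \<phi>"
  by (induction xs) auto

lemma univ_prefix_foldr_QAll [simp]: "univ_prefix (foldr QAll xs \<phi>) \<longleftrightarrow> univ_prefix \<phi>"
  by (induction xs) auto

lemma almost_conj_foldr_QAll [simp]: "almost_conj (foldr QAll xs \<phi>) \<longleftrightarrow> almost_conj \<phi>"
  by (induction xs) auto

lemma L_ESO_elim:
  "L_ESO {OSum} {CEq} {0, 1} \<phi> \<Longrightarrow> L_ESO {OSum} {CEq} {} (elim N env \<phi>)"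
proof -
  have "term_ok {OSum} {0, 1} t \<Longrightarrow> term_ok {OSum} {} (elim_term N env t)" for t env
    by (induction t) (auto simp: code_sym_def)
  then show "L_ESO {OSum} {CEq} {0, 1} \<phi> \<Longrightarrow> L_ESO {OSum} {CEq} {} (elim N env \<phi>)"
    by (induction \<phi> arbitrary: env) (auto simp: L_ESO_def row_fm_all_def row_fm_def code_sym_def)
qed

lemma qfree_elim:
  "qfree \<phi> \<Longrightarrow> qfree (elim N env \<phi>) \<and> has_num (elim N env \<phi>) = has_num \<phi> \<and>
    almost_conj (elim N env \<phi>) = almost_conj \<phi>"
  by (induction \<phi>) auto

lemma row_fms_syntax:
  "L_ESO {OSum} {CEq} {} (row_fms N V fs) \<and> qfree (row_fms N V fs) \<and> almost_conj (row_fms N V fs)"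
  by (induction fs) (auto simp: L_ESO_def row_fms_def row_fm_def code_sym_def)

lemma L_ESO_elim_prenex:
  "L_ESO {OSum} {CEq} {0, 1} \<phi> \<Longrightarrow> L_ESO {OSum} {CEq} {} (elim_prenex N V K fs \<phi>)"
  using L_ESO_elim row_fms_syntax
  by (induction \<phi> arbitrary: fs)
    (auto simp: L_ESO_def elim_matrix_def diag_zero_fm_def simp del: elim.simps)

lemma univ_prefix_elim_matrix:
  "qfree \<phi> \<Longrightarrow> almost_conj \<phi> \<Longrightarrow>
    univ_prefix (elim_matrix N V K fs \<phi>) \<and> almost_conj (elim_matrix N V K fs \<phi>)"
  using qfree_elim row_fms_syntax by (simp add: elim_matrix_def diag_zero_fm_def)

lemma eso_univ_elim_matrix: "eso_univ (elim_matrix N V K fs \<phi>) \<longleftrightarrow> univ_prefix (elim_matrix N V K fs \<phi>)"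
proof -
  have "eso_univ (foldr QAll xs (Conj a b)) \<longleftrightarrow> univ_prefix (foldr QAll xs (Conj a b))" for xs a b
    by (cases xs) auto
  then show ?thesis by (simp only: elim_matrix_def)
qed

lemma eso_univ_elim_prenex:
  assumes "eso_univ \<phi>" and "almost_conj \<phi>"
  shows "eso_univ (elim_prenex N V K fs \<phi>) \<and> almost_conj (elim_prenex N V K fs \<phi>)"
proof -
  have univ: "univ_prefix \<psi> \<Longrightarrow> almost_conj \<psi> \<Longrightarrow>
      univ_prefix (elim_prenex N V K gs \<psi>) \<and> almost_conj (elim_prenex N V K gs \<psi>)" for \<psi> gs
    by (induction \<psi> arbitrary: gs) (simp_all add: univ_prefix_elim_matrix)
  from assms show ?thesis
  proof (induction \<phi> arbitrary: fs)
    case (QAll x a)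
    then show ?case using univ[of a fs] by simp
  qed (simp_all add: eso_univ_elim_matrix univ_prefix_elim_matrix)
qed

lemma L_ESO_dist_encoding:
  "L_ESO {OSum} {CEq} {0, 1} \<phi> \<Longrightarrow> L_ESO {OSum} {CEq} {} (dist_encoding \<phi>)"
  using L_ESO_elim_prenex by (simp add: dist_encoding_def L_ESO_def)

lemma eso_univ_dist_encoding:
  "eso_univ \<phi> \<Longrightarrow> almost_conj \<phi> \<Longrightarrow> eso_univ (dist_encoding \<phi>) \<and> almost_conj (dist_encoding \<phi>)"
  using eso_univ_elim_prenex by (simp add: dist_encoding_def)

lemma leq_onI:
  assumes "\<And>\<phi>. P \<phi> \<Longrightarrow> P' (t \<phi>)"
    and "\<And>\<phi> A R F s. P \<phi> \<Longrightarrow> is_structure X A F \<Longrightarrow> \<forall>x. s x \<in> A \<Longrightarrow>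
      sat Q A R F s \<phi> \<longleftrightarrow> sat Q' A R F s (t \<phi>)"
  shows "leq_on X (Q, P) (Q', P')"
  using assms unfolding leq_on_def by fastforce

theorem mainTheorem8:
  shows "equiv_on (ValsIn {0..1})
           (ValsIn {0..1}, L_ESO {OSum} {CEq} {0, 1})
           (Dist, L_ESO {OSum} {CEq} {})
       \<and> equiv_on (ValsIn {0..1})
           (ValsIn {0..1}, \<lambda>\<phi>. L_ESO {OSum} {CEq} {0, 1} \<phi> \<and> almost_conj \<phi> \<and> eso_univ \<phi>)
           (Dist, \<lambda>\<phi>. L_ESO {OSum} {CEq} {} \<phi> \<and> almost_conj \<phi> \<and> eso_univ \<phi>)"
proof -
  have encode: "sat (ValsIn {0..1}) A R F s \<phi> \<longleftrightarrow> sat Dist A R F s (dist_encoding \<phi>)"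
    if "L_ESO {OSum} {CEq} {0, 1} \<phi>" "is_structure X A F" "\<forall>x. s x \<in> A" for X \<phi> A R F s
    using sat_dist_encoding that by (auto simp: L_ESO_def)
  have L_ESO_guard: "L_ESO {OSum} {CEq} {0, 1} (dist_guard_prenex [] \<phi>)"
    if "L_ESO {OSum} {CEq} {} \<phi>" for \<phi>
    using L_ESO_dist_guard_prenex L_ESO_mono[OF that] by blast
  have "leq_on (ValsIn {0..1}) (ValsIn {0..1}, L_ESO {OSum} {CEq} {0, 1}) (Dist, L_ESO {OSum} {CEq} {})"
    by (rule leq_onI[where t = dist_encoding]) (simp_all add: L_ESO_dist_encoding encode)
  moreover have
    "leq_on (ValsIn {0..1}) (Dist, L_ESO {OSum} {CEq} {}) (ValsIn {0..1}, L_ESO {OSum} {CEq} {0, 1})"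
    by (rule leq_onI[where t = "dist_guard_prenex []"])
      (simp_all add: L_ESO_guard sat_dist_guard_prenex_Nil)
  moreover have "leq_on (ValsIn {0..1})
      (ValsIn {0..1}, \<lambda>\<phi>. L_ESO {OSum} {CEq} {0, 1} \<phi> \<and> almost_conj \<phi> \<and> eso_univ \<phi>)
      (Dist, \<lambda>\<phi>. L_ESO {OSum} {CEq} {} \<phi> \<and> almost_conj \<phi> \<and> eso_univ \<phi>)"
    by (rule leq_onI[where t = dist_encoding])
      (simp_all add: L_ESO_dist_encoding eso_univ_dist_encoding encode)
  moreover have "leq_on (ValsIn {0..1})
      (Dist, \<lambda>\<phi>. L_ESO {OSum} {CEq} {} \<phi> \<and> almost_conj \<phi> \<and> eso_univ \<phi>)
      (ValsIn {0..1}, \<lambda>\<phi>. L_ESO {OSum} {CEq} {0, 1} \<phi> \<and> almost_conj \<phi> \<and> eso_univ \<phi>)"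
    by (rule leq_onI[where t = "dist_guard_prenex []"])
      (simp_all add: L_ESO_guard eso_univ_dist_guard_prenex sat_dist_guard_prenex_Nil)
  ultimately show ?thesis unfolding equiv_on_def by blast
qed

end
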